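(* Let $\phi:H\to H$ be a coalgebra automorphism. Then there is an integer $r$ such that for every $n\in\mathbb{Z}$, $$\phi(x^n)=x^{n+r},\qquad \phi(x^ny)=\alpha_nx^{n+r}y+\beta_n(x^{n+r+1}-x^{n+r})$$ for some $\alpha_n\in k^\times$ and $\beta_n\in k$.
   Context: Let $k$ be a field and $0\neq q\in k$ not a root of unity. $H=k_q[x,x^{-1},y]$ is the $k$-algebra generated by $x,x^{-1},y$ with $xx^{-1}=x^{-1}x=1$, $yx=qxy$, a Hopf algebra with $\Delta(x)=x\otimes x$, $\Delta(x^{-1})=x^{-1}\otimes x^{-1}$, $\Delta(y)=y\otimes x+1\otimes y$, $\varepsilon(x)=1$, $\varepsilon(y)=0$; $\{x^ny^m:n\in\mathbb{Z},m\in\mathbb{N}\}$ is a $k$-basis. *)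

theory Defs
  imports Main
begin

(* Elements of H = k_q[x,x^-1,y]: finitely supported coefficient functions on the
   basis {x^n y^m : n \<in> int, m \<in> nat}, indexed by (n,m).
   Elements of H \<otimes> H: finitely supported functions on pairs of basis indices,
   ((a,b),(c,d)) standing for x^a y^b \<otimes> x^c y^d. *)

type_synonym 'k H = "int \<times> nat \<Rightarrow> 'k"
type_synonym 'k HH = "(int \<times> nat) \<times> (int \<times> nat) \<Rightarrow> 'k"

definition supp :: "('a \<Rightarrow> 'k::zero) \<Rightarrow> 'a set" where
  "supp f = {a. f a \<noteq> 0}"

definition fin :: "('a \<Rightarrow> 'k::zero) \<Rightarrow> bool" where
  "fin f \<longleftrightarrow> finite (supp f)"

definition basis :: "'a \<Rightarrow> ('a \<Rightarrow> 'k::{zero,one})" where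
  "basis u = (\<lambda>p. if p = u then 1 else 0)"

definition mon :: "int \<Rightarrow> nat \<Rightarrow> 'k::{zero,one} H" where
  "mon n m = basis (n, m)"

(* multiplication in the algebra H \<otimes> H, using
   (x^a y^b)(x^c y^d) = q^(b c) x^(a+c) y^(b+d)  (from yx = qxy) in each factor *)
definition tmul :: "'k::field \<Rightarrow> 'k HH \<Rightarrow> 'k HH \<Rightarrow> 'k HH" where
  "tmul q s t = (\<lambda>z. \<Sum>(a, b) \<in> {(a, b). a \<in> supp s \<and> b \<in> supp t \<and>
        fst (fst a) + fst (fst b) = fst (fst z) \<and> snd (fst a) + snd (fst b) = snd (fst z) \<and>
        fst (snd a) + fst (snd b) = fst (snd z) \<and> snd (snd a) + snd (snd b) = snd (snd z)}.
      s a * t b * q powi (int (snd (fst a)) * fst (fst b) + int (snd (snd a)) * fst (snd b)))"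

primrec tpow :: "'k::field \<Rightarrow> 'k HH \<Rightarrow> nat \<Rightarrow> 'k HH" where
  "tpow q s 0 = basis ((0, 0), (0, 0))"
| "tpow q s (Suc m) = tmul q (tpow q s m) s"

definition Dy :: "'k::field HH" where
  "Dy = (\<lambda>p. basis ((0, 1), (1, 0)) p + basis ((0, 0), (0, 1)) p)"

(* \<Delta>(x^n y^m) = \<Delta>(x)^n \<Delta>(y)^m = (x^n \<otimes> x^n) \<Delta>(y)^m *)
definition DeltaMon :: "'k::field \<Rightarrow> int \<times> nat \<Rightarrow> 'k HH" where
  "DeltaMon q p = tmul q (basis ((fst p, 0), (fst p, 0))) (tpow q Dy (snd p))"

definition Delta :: "'k::field \<Rightarrow> 'k H \<Rightarrow> 'k HH" where
  "Delta q f = (\<lambda>t. \<Sum>p \<in> supp f. f p * DeltaMon q p t)"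

definition eps :: "'k::field H \<Rightarrow> 'k" where
  "eps f = (\<Sum>p \<in> supp f. f p * (if snd p = 0 then 1 else 0))"

definition tensor_map :: "('k::field H \<Rightarrow> 'k H) \<Rightarrow> 'k HH \<Rightarrow> 'k HH" where
  "tensor_map \<phi> t = (\<lambda>z. \<Sum>p \<in> supp t.
      t p * \<phi> (basis (fst p)) (fst z) * \<phi> (basis (snd p)) (snd z))"

definition coalg_aut :: "'k::field \<Rightarrow> ('k H \<Rightarrow> 'k H) \<Rightarrow> bool" where
  "coalg_aut q \<phi> \<longleftrightarrow>
     (\<forall>f. fin f \<longrightarrow> fin (\<phi> f)) \<and>
     (\<forall>f g. fin f \<longrightarrow> fin g \<longrightarrow> \<phi> (\<lambda>p. f p + g p) = (\<lambda>p. \<phi> f p + \<phi> g p)) \<and>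
     (\<forall>c f. fin f \<longrightarrow> \<phi> (\<lambda>p. c * f p) = (\<lambda>p. c * \<phi> f p)) \<and>
     bij_betw \<phi> {f. fin f} {f. fin f} \<and>
     (\<forall>f. fin f \<longrightarrow> Delta q (\<phi> f) = tensor_map \<phi> (Delta q f)) \<and>
     (\<forall>f. fin f \<longrightarrow> eps (\<phi> f) = eps f)"

end

theory Submission imports Defs begin

(* Comparing coefficients in \<Delta>(f) = \<Sum> f(n,m) (x^n \<otimes> x^n) \<Delta>(y)^m shows that
   the grouplike elements of H are exactly the x^a, so \<phi>(x^n) = x^(\<sigma> n) for some \<sigma>.
   Then \<phi>(x^n y) is (x^(\<sigma> n), x^(\<sigma>(n+1)))-skew primitive.  In \<Delta>(y)^m the
   coefficient of y \<otimes> x y^(m-1) is the q-integer [m]_q, which is nonzero because q is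
   not a root of unity; hence a skew primitive element has no terms of y-degree \<ge> 2,
   and it is of the form \<alpha> x^s y + \<beta> (x^s' - x^s), with s' = s + 1 whenever \<alpha> \<noteq> 0.
   Injectivity of \<phi> forces \<alpha> \<noteq> 0, so \<sigma>(n+1) = \<sigma> n + 1. *)

definition grouplike :: "'k::field \<Rightarrow> 'k H \<Rightarrow> bool" where
  "grouplike q g \<longleftrightarrow> g \<noteq> (\<lambda>p. 0) \<and> (\<forall>z. Delta q g z = g (fst z) * g (snd z))"

definition skew_primitive :: "'k::field \<Rightarrow> int \<Rightarrow> int \<Rightarrow> 'k H \<Rightarrow> bool" where
  "skew_primitive q s s' h \<longleftrightarrow>
     (\<forall>z. Delta q h z = h (fst z) * mon s' 0 (snd z) + mon s 0 (fst z) * h (snd z))"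

lemma supp_basis: "supp (basis u :: 'a \<Rightarrow> 'k::zero_neq_one) = {u}"
  by (auto simp: supp_def basis_def)

lemma fin_mon: "fin (mon n m :: 'k::field H)"
  by (simp add: fin_def mon_def supp_basis)

lemma fin_lin_comb:
  assumes "fin f" and "fin g"
  shows "fin (\<lambda>p. (a::'k::field) * f p + b * g p)"
proof -
  have "supp (\<lambda>p. a * f p + b * g p) \<subseteq> supp f \<union> supp g"
    by (auto simp: supp_def)
  then show ?thesis
    using assms by (auto simp: fin_def intro: finite_subset)
qed

lemma tmul_Dy_coeff:
  fixes s :: "'k::field HH"
  shows "tmul q s Dy ((a,b),(c,d)) =
    (if 1 \<le> b then q ^ d * s ((a,b-1),(c-1,d)) else 0) + (if 1 \<le> d then s ((a,b),(c,d-1)) else 0)"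
proof -
  define u1 :: "(int\<times>nat)\<times>(int\<times>nat)" where "u1 = ((0,1),(1,0))"
  define u2 :: "(int\<times>nat)\<times>(int\<times>nat)" where "u2 = ((0,0),(0,1))"
  define x1 :: "(int\<times>nat)\<times>(int\<times>nat)" where "x1 = ((a,b-1),(c-1,d))"
  define x2 :: "(int\<times>nat)\<times>(int\<times>nat)" where "x2 = ((a,b),(c,d-1))"
  define F where "F = (\<lambda>(x::(int\<times>nat)\<times>(int\<times>nat), y::(int\<times>nat)\<times>(int\<times>nat)).
    s x * Dy y * q powi (int (snd (fst x)) * fst (fst y) + int (snd (snd x)) * fst (snd y)))"
  define A where "A = {(x, y). x \<in> supp s \<and> y \<in> supp (Dy::'k HH) \<and>
    fst (fst x) + fst (fst y) = a \<and> snd (fst x) + snd (fst y) = b \<and>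
    fst (snd x) + fst (snd y) = c \<and> snd (snd x) + snd (snd y) = d}"
  define B where "B = (if 1 \<le> b then {(x1,u1)} else {}) \<union> (if 1 \<le> d then {(x2,u2)} else {})"
  have supp_Dy: "supp (Dy :: 'k HH) = {u1, u2}"
    by (auto simp: supp_def Dy_def basis_def u1_def u2_def)
  have "tmul q s Dy ((a,b),(c,d)) = sum F A"
    unfolding tmul_def F_def A_def by simp
  also have "\<dots> = sum F B"
  proof (rule sum.mono_neutral_left)
    show "A \<subseteq> B"
      unfolding A_def B_def supp_Dy u1_def u2_def x1_def x2_def by auto
    show "\<forall>i\<in>B - A. F i = 0"
      unfolding A_def B_def supp_Dy u1_def u2_def x1_def x2_def F_def by (auto simp: supp_def)
  qed (simp add: B_def)
  also have "\<dots> = (if 1 \<le> b then F (x1,u1) else 0) + (if 1 \<le> d then F (x2,u2) else 0)"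
    unfolding B_def by (auto simp: u1_def u2_def)
  also have "F (x1,u1) = q ^ d * s ((a,b-1),(c-1,d))"
    by (simp add: F_def x1_def u1_def Dy_def basis_def power_int_of_nat)
  also have "F (x2,u2) = s ((a,b),(c,d-1))"
    by (simp add: F_def x2_def u2_def Dy_def basis_def)
  finally show ?thesis .
qed

lemma tmul_basis_diag_left_coeff:
  fixes t :: "'k::field HH"
  shows "tmul q (basis ((n,0),(n,0))) t ((a,b),(c,d)) = t ((a-n,b),(c-n,d))"
proof -
  define u :: "(int\<times>nat)\<times>(int\<times>nat)" where "u = ((n,0),(n,0))"
  define y :: "(int\<times>nat)\<times>(int\<times>nat)" where "y = ((a-n,b),(c-n,d))"
  define F where "F = (\<lambda>(x::(int\<times>nat)\<times>(int\<times>nat), y::(int\<times>nat)\<times>(int\<times>nat)).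
    basis u x * t y * q powi (int (snd (fst x)) * fst (fst y) + int (snd (snd x)) * fst (snd y)))"
  define A where "A = {(x, y). x \<in> supp (basis u :: 'k HH) \<and> y \<in> supp t \<and>
    fst (fst x) + fst (fst y) = a \<and> snd (fst x) + snd (fst y) = b \<and>
    fst (snd x) + fst (snd y) = c \<and> snd (snd x) + snd (snd y) = d}"
  have "tmul q (basis u) t ((a,b),(c,d)) = sum F A"
    unfolding tmul_def F_def A_def by simp
  also have "\<dots> = sum F {(u,y)}"
  proof (rule sum.mono_neutral_left)
    show "A \<subseteq> {(u,y)}"
      unfolding A_def supp_basis u_def y_def by auto
    show "\<forall>i\<in>{(u,y)} - A. F i = 0"
      unfolding A_def supp_basis u_def y_def F_def by (auto simp: supp_def)
  qed simp
  also have "\<dots> = t y"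
    by (simp add: F_def u_def basis_def)
  finally show ?thesis
    by (simp add: u_def y_def)
qed

lemma tpow_Dy_coeff_nonzero:
  "tpow q (Dy::'k::field HH) m ((a,b),(c,d)) \<noteq> 0 \<Longrightarrow> a = 0 \<and> c = int b \<and> b + d = m"
proof (induction m arbitrary: a b c d)
  case 0
  then show ?case by (auto simp: basis_def split: if_splits)
next
  case (Suc m)
  then have "(1 \<le> b \<and> tpow q Dy m ((a,b-1),(c-1,d)) \<noteq> 0) \<or> (1 \<le> d \<and> tpow q Dy m ((a,b),(c,d-1)) \<noteq> 0)"
    by (auto simp: tmul_Dy_coeff split: if_splits)
  then show ?case
  proof
    assume "1 \<le> b \<and> tpow q Dy m ((a,b-1),(c-1,d)) \<noteq> 0"
    with Suc.IH[of a "b-1" "c-1" d] show ?thesis by auto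
  next
    assume "1 \<le> d \<and> tpow q Dy m ((a,b),(c,d-1)) \<noteq> 0"
    with Suc.IH[of a b c "d-1"] show ?thesis by auto
  qed
qed

lemma tpow_Dy_coeff_right: "tpow q (Dy::'k::field HH) m ((0,0),(0,m)) = 1"
  by (induction m) (auto simp: tmul_Dy_coeff basis_def)

lemma tpow_Dy_coeff_left: "tpow q (Dy::'k::field HH) m ((0,m),(int m,0)) = 1"
  by (induction m) (simp_all add: tmul_Dy_coeff basis_def)

lemma tpow_Dy_coeff_q_integer:
  "tpow q (Dy::'k::field HH) (Suc m) ((0,1),(1,m)) = (\<Sum>i<Suc m. q ^ i)"
proof (induction m)
  case 0
  then show ?case by (simp add: tmul_Dy_coeff basis_def)
next
  case (Suc m)
  have "tpow q (Dy::'k HH) (Suc (Suc m)) ((0,1),(1,Suc m))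
      = q ^ Suc m * tpow q Dy (Suc m) ((0,0),(0,Suc m)) + tpow q Dy (Suc m) ((0,1),(1,m))"
    unfolding tpow.simps(2)[of q Dy "Suc m"] tmul_Dy_coeff by simp
  with Suc tpow_Dy_coeff_right[of q "Suc m"] show ?case
    by (simp del: tpow.simps)
qed

lemma Delta_coeff:
  fixes f :: "'k::field H"
  assumes "fin f"
  shows "Delta q f ((a,b),(c,d)) =
    (if c = a + int b then f (a, b+d) * tpow q Dy (b+d) ((0,b),(int b,d)) else 0)"
proof -
  define G where "G = (\<lambda>p. f p * DeltaMon q p ((a,b),(c,d)))"
  have G_eq: "G (n,m) = f (n,m) * tpow q Dy m ((a-n,b),(c-n,d))" for n m
    by (simp add: G_def DeltaMon_def tmul_basis_diag_left_coeff)
  have "Delta q f ((a,b),(c,d)) = sum G (supp f)"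
    by (simp add: Delta_def G_def)
  also have "\<dots> = sum G (supp f \<inter> {(a,b+d)})"
  proof (rule sum.mono_neutral_right)
    show "finite (supp f)"
      using assms by (simp add: fin_def)
    show "\<forall>p\<in>supp f - supp f \<inter> {(a,b+d)}. G p = 0"
      using tpow_Dy_coeff_nonzero by (fastforce simp: G_eq)
  qed auto
  also have "\<dots> = (if c = a + int b then f (a, b+d) * tpow q Dy (b+d) ((0,b),(int b,d)) else 0)"
    using tpow_Dy_coeff_nonzero[of q "b+d" 0 b "c-a" d]
    by (cases "(a,b+d) \<in> supp f") (auto simp: G_eq supp_def algebra_simps)
  finally show ?thesis .
qed

lemma Delta_mon0: "Delta q (mon n 0 :: 'k::field H) = basis ((n,0),(n,0))"
proof
  fix z :: "(int \<times> nat) \<times> (int \<times> nat)"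
  obtain a b c d where z: "z = ((a,b),(c,d))"
    by (metis prod.collapse)
  show "Delta q (mon n 0 :: 'k H) z = basis ((n,0),(n,0)) z"
    unfolding z Delta_coeff[OF fin_mon] using tpow_Dy_coeff_right[of q 0]
    by (auto simp: mon_def basis_def)
qed

lemma Delta_mon1:
  "Delta q (mon n 1 :: 'k::field H) = (\<lambda>p. basis ((n,1),(n+1,0)) p + basis ((n,0),(n,1)) p)"
proof
  fix z :: "(int \<times> nat) \<times> (int \<times> nat)"
  obtain a b c d where z: "z = ((a,b),(c,d))"
    by (metis prod.collapse)
  have "b + d = 1 \<Longrightarrow> (b = 0 \<and> d = 1) \<or> (b = 1 \<and> d = 0)"
    by auto
  then show "Delta q (mon n 1 :: 'k H) z = basis ((n,1),(n+1,0)) z + basis ((n,0),(n,1)) z"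
    unfolding z Delta_coeff[OF fin_mon] using tpow_Dy_coeff_right[of q 1] tpow_Dy_coeff_left[of q 1]
    by (auto simp: mon_def basis_def)
qed

lemma tensor_map_basis:
  "tensor_map \<phi> (basis u) z = \<phi> (basis (fst u)) (fst z) * \<phi> (basis (snd u)) (snd z)"
  unfolding tensor_map_def supp_basis by (simp add: basis_def)

lemma tensor_map_basis_add:
  assumes "u \<noteq> v"
  shows "tensor_map \<phi> (\<lambda>p. basis u p + basis v p) z =
     \<phi> (basis (fst u)) (fst z) * \<phi> (basis (snd u)) (snd z)
     + \<phi> (basis (fst v)) (fst z) * \<phi> (basis (snd v)) (snd z)"
proof -
  have supp_sum: "supp (\<lambda>p. basis u p + basis v p :: 'k::field) = {u, v}"
    using assms by (auto simp: supp_def basis_def)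
  show ?thesis
    unfolding tensor_map_def supp_sum using assms by (simp add: basis_def)
qed

lemma sum_powers_nonzero:
  fixes q :: "'k::field"
  assumes "\<forall>n::nat. n > 0 \<longrightarrow> q ^ n \<noteq> 1" and "m > 0"
  shows "(\<Sum>i<m. q ^ i) \<noteq> 0"
  using assms assms(1)[rule_format, of 1] by (simp add: sum_gp_strict)

lemma grouplike_eq_mon:
  fixes g :: "'k::field H"
  assumes "fin g" and "grouplike q g"
  obtains a where "g = mon a 0"
proof -
  have D: "Delta q g z = g (fst z) * g (snd z)" for z
    using assms(2) unfolding grouplike_def by blast
  have supp_shift: "c = a + int b" if "g (a,b) \<noteq> 0" "g (c,d) \<noteq> 0" for a b c d
    using D[of "((a,b),(c,d))"] that by (auto simp: Delta_coeff[OF assms(1)] split: if_splits)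
  obtain a b where ab: "g (a,b) \<noteq> 0"
    using assms(2) by (fastforce simp: grouplike_def)
  then have b0: "b = 0"
    using supp_shift[OF ab ab] by simp
  have supp_g: "p = (a,0)" if "g p \<noteq> 0" for p
    using supp_shift[OF ab, of "fst p" "snd p"] supp_shift[of "fst p" "snd p" a b] that ab b0
    by (cases p) auto
  have "g (a,0) * g (a,0) = g (a,0)"
    using D[of "((a,0),(a,0))"] tpow_Dy_coeff_right[of q 0] by (simp add: Delta_coeff[OF assms(1)])
  then have "g (a,0) = 1"
    using ab b0 by simp
  have "g = mon a 0"
  proof
    fix p
    show "g p = mon a 0 p"
      using supp_g[of p] \<open>g (a,0) = 1\<close> by (cases "p = (a,0)") (auto simp: mon_def basis_def)
  qed
  then show thesis ..
qed

lemma skew_primitive_coeff: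
  fixes h :: "'k::field H"
  assumes "fin h" and "skew_primitive q s s' h"
  shows "(if c = a + int b then h (a, b+d) * tpow q Dy (b+d) ((0,b),(int b,d)) else 0)
      = h (a,b) * mon s' 0 (c,d) + mon s 0 (a,b) * h (c,d)"
  using assms(2) by (simp add: skew_primitive_def Delta_coeff[OF assms(1), symmetric])

lemma skew_primitive_eq:
  fixes q :: "'k::field" and h :: "'k H"
  assumes "fin h" and "skew_primitive q s s' h" and "\<forall>n::nat. n > 0 \<longrightarrow> q ^ n \<noteq> 1"
  shows "h = (\<lambda>p. h (s,1) * mon s 1 p + h (s',0) * (mon s' 0 p - mon s 0 p))"
    and "h (s,1) \<noteq> 0 \<Longrightarrow> s' = s + 1"
proof -
  note E = skew_primitive_coeff[OF assms(1,2)]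
  have off_s: "h (a,m) = 0" if "m \<ge> 1" "a \<noteq> s" for a m
    using E[of a a 0 m] tpow_Dy_coeff_right[of q m] that by (simp add: mon_def basis_def)
  have off_s': "h (a,m) = 0" if "m \<ge> 1" "a + int m \<noteq> s'" for a m
    using E[of "a + int m" a m 0] tpow_Dy_coeff_left[of q m] that by (simp add: mon_def basis_def)
  have high_degree: "h (a,m) = 0" if "m \<ge> 2" for a m
  proof -
    define k where "k = m - 2"
    have m: "m = Suc (Suc k)"
      using that k_def by simp
    have "h (a,m) * (\<Sum>i<m. q ^ i) = 0"
      using E[of "a+1" a 1 "Suc k"] tpow_Dy_coeff_q_integer[of q "Suc k"] by (simp add: mon_def basis_def m)
    then show ?thesis
      using sum_powers_nonzero[OF assms(3), of m] m by simp
  qed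
  have degree0_off: "h (a,0) = 0" if "a \<noteq> s" "a \<noteq> s'" for a
    using E[of a a 0 0] that by (simp add: mon_def basis_def)
  have degree0_eq: "h (s,0) = 0" if "s = s'"
  proof -
    have "h (s,0) * tpow q Dy 0 ((0,0),(0,0)) = h (s,0) + h (s,0)"
      using E[of s s 0 0] that by (simp add: mon_def basis_def)
    then show ?thesis
      using tpow_Dy_coeff_right[of q 0] by (metis add_cancel_left_right mult_1_right)
  qed
  have degree0_opp: "h (s,0) = - h (s',0)" if "s \<noteq> s'"
    using E[of s' s 0 0] that by (simp add: mon_def basis_def eq_neg_iff_add_eq_0)
  show "h = (\<lambda>p. h (s,1) * mon s 1 p + h (s',0) * (mon s' 0 p - mon s 0 p))"
  proof
    fix p :: "int \<times> nat"
    obtain a m where p: "p = (a,m)"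
      by (cases p)
    consider "m = 0" | "m = 1" | "m \<ge> 2"
      by linarith
    then show "h p = h (s,1) * mon s 1 p + h (s',0) * (mon s' 0 p - mon s 0 p)"
    proof cases
      case 1
      then show ?thesis
        using degree0_off[of a] degree0_eq degree0_opp
        by (cases "a = s"; cases "s = s'") (auto simp: p mon_def basis_def)
    next
      case 2
      then show ?thesis
        using off_s[of 1 a] by (cases "a = s") (auto simp: p mon_def basis_def)
    next
      case 3
      then show ?thesis
        using high_degree[of m a] by (auto simp: p mon_def basis_def)
    qed
  qed
  show "s' = s + 1" if "h (s,1) \<noteq> 0"
    using off_s'[of 1 s] that by auto
qed

lemma coalg_aut_fin: "coalg_aut q \<phi> \<Longrightarrow> fin f \<Longrightarrow> fin (\<phi> f)"
  by (simp add: coalg_aut_def)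

lemma coalg_aut_Delta:
  "coalg_aut q \<phi> \<Longrightarrow> fin f \<Longrightarrow> Delta q (\<phi> f) = tensor_map \<phi> (Delta q f)"
  by (simp add: coalg_aut_def)

lemma coalg_aut_inj:
  "coalg_aut q \<phi> \<Longrightarrow> fin f \<Longrightarrow> fin g \<Longrightarrow> \<phi> f = \<phi> g \<Longrightarrow> f = g"
  by (auto simp: coalg_aut_def bij_betw_def dest: inj_onD)

lemma coalg_aut_lin_comb:
  assumes "coalg_aut q \<phi>" and "fin f" and "fin g"
  shows "\<phi> (\<lambda>p. a * f p + b * g p) = (\<lambda>p. a * \<phi> f p + b * \<phi> g p)"
proof -
  have "fin (\<lambda>p. a * f p)" "fin (\<lambda>p. b * g p)"
    using fin_lin_comb[OF assms(2,2), of a 0] fin_lin_comb[OF assms(3,3), of b 0] by simp_all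
  then show ?thesis
    using assms by (simp add: coalg_aut_def)
qed

lemma coalg_aut_mon_nonzero:
  assumes "coalg_aut q \<phi>"
  shows "\<phi> (mon n m) \<noteq> (\<lambda>p. 0)"
proof
  have fin_0: "fin (\<lambda>p. 0 :: 'a)"
    by (simp add: fin_def supp_def)
  have "\<phi> (\<lambda>p. 0) = (\<lambda>p. 0)"
    using coalg_aut_lin_comb[OF assms fin_mon fin_mon, of 0 n m 0 n m] by simp
  moreover assume "\<phi> (mon n m) = (\<lambda>p. 0)"
  ultimately have "mon n m = (\<lambda>p. 0 :: 'a)"
    using coalg_aut_inj[OF assms fin_mon fin_0] by simp
  then show False
    by (metis mon_def basis_def zero_neq_one)
qed

lemma coalg_aut_grouplike:
  assumes "coalg_aut q \<phi>"
  obtains a where "\<phi> (mon n 0) = mon a 0"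
proof (rule grouplike_eq_mon)
  show "fin (\<phi> (mon n 0))"
    using coalg_aut_fin[OF assms fin_mon] .
  have "Delta q (\<phi> (mon n 0)) = tensor_map \<phi> (basis ((n,0),(n,0)))"
    unfolding coalg_aut_Delta[OF assms fin_mon] Delta_mon0 ..
  then show "grouplike q (\<phi> (mon n 0))"
    using coalg_aut_mon_nonzero[OF assms] by (simp add: grouplike_def tensor_map_basis flip: mon_def)
qed

lemma coalg_aut_skew_primitive:
  assumes "coalg_aut q \<phi>" and "\<phi> (mon n 0) = mon s 0" and "\<phi> (mon (n+1) 0) = mon s' 0"
  shows "skew_primitive q s s' (\<phi> (mon n 1))"
proof -
  have "Delta q (\<phi> (mon n 1)) = tensor_map \<phi> (\<lambda>p. basis ((n,1),(n+1,0)) p + basis ((n,0),(n,1)) p)"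
    unfolding coalg_aut_Delta[OF assms(1) fin_mon] Delta_mon1 ..
  then show ?thesis
    using assms(2,3) by (simp add: skew_primitive_def tensor_map_basis_add flip: mon_def)
qed

lemma coalg_aut_mon1:
  assumes "coalg_aut q \<phi>" and "\<forall>n::nat. n > 0 \<longrightarrow> q ^ n \<noteq> 1"
    and "\<phi> (mon n 0) = mon s 0" and "\<phi> (mon (n+1) 0) = mon s' 0"
  shows "s' = s + 1"
    and "\<exists>\<alpha> \<beta>. \<alpha> \<noteq> 0 \<and> \<phi> (mon n 1) = (\<lambda>p. \<alpha> * mon s 1 p + \<beta> * (mon s' 0 p - mon s 0 p))"
proof -
  define h where "h = \<phi> (mon n 1)"
  note h_eq = skew_primitive_eq[OF coalg_aut_fin[OF assms(1) fin_mon]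
      coalg_aut_skew_primitive[OF assms(1,3,4)] assms(2), folded h_def]
  have "h (s,1) \<noteq> 0"
  proof
    assume "h (s,1) = 0"
    define \<beta> where "\<beta> = h (s',0)"
    define w where "w = (\<lambda>p. \<beta> * mon (n+1) 0 p + (- \<beta>) * mon n 0 p)"
    have fin_w: "fin w"
      unfolding w_def by (rule fin_lin_comb[OF fin_mon fin_mon])
    have "\<phi> w = (\<lambda>p. \<beta> * mon s' 0 p + (- \<beta>) * mon s 0 p)"
      unfolding w_def coalg_aut_lin_comb[OF assms(1) fin_mon fin_mon] assms(3,4) ..
    also have "\<dots> = h"
      using \<open>h (s,1) = 0\<close> by (subst h_eq(1)) (simp add: \<beta>_def[symmetric] algebra_simps)
    finally have "w = mon n 1"
      using coalg_aut_inj[OF assms(1) fin_w fin_mon] unfolding h_def by blast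
    then have "w (n,1) = mon n 1 (n,1)"
      by simp
    then show False
      by (simp add: w_def mon_def basis_def)
  qed
  with h_eq show "s' = s + 1"
    and "\<exists>\<alpha> \<beta>. \<alpha> \<noteq> 0 \<and> \<phi> (mon n 1) = (\<lambda>p. \<alpha> * mon s 1 p + \<beta> * (mon s' 0 p - mon s 0 p))"
    unfolding h_def by blast+
qed

theorem lemma2p2:
  fixes q :: "'k::field" and \<phi> :: "'k H \<Rightarrow> 'k H"
  assumes "q \<noteq> 0" and "\<forall>n::nat. n > 0 \<longrightarrow> q ^ n \<noteq> 1"
    and "coalg_aut q \<phi>"
  shows "\<exists>r::int. \<forall>n::int.
           \<phi> (mon n 0) = mon (n + r) 0 \<and>
           (\<exists>\<alpha> \<beta>::'k. \<alpha> \<noteq> 0 \<and>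
              \<phi> (mon n 1) = (\<lambda>p. \<alpha> * mon (n + r) 1 p
                                  + \<beta> * (mon (n + r + 1) 0 p - mon (n + r) 0 p)))"
proof -
  have "\<forall>n. \<exists>a. \<phi> (mon n 0) = mon a 0"
    using coalg_aut_grouplike[OF assms(3)] by blast
  then obtain \<sigma> where \<sigma>: "\<And>n. \<phi> (mon n 0) = mon (\<sigma> n) 0"
    by metis
  note mon1 = coalg_aut_mon1[OF assms(3,2) \<sigma> \<sigma>]
  have \<sigma>_shift: "\<sigma> n = n + \<sigma> 0" for n
  proof (induction n rule: int_induct[where k = 0])
    case (step1 i)
    then show ?case using mon1(1)[of i] by simp
  next
    case (step2 i)
    then show ?case using mon1(1)[of "i - 1"] by simp
  qed simp
  show ?thesis
  proof (rule exI[of _ "\<sigma> 0"], intro allI conjI)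
    fix n
    show "\<phi> (mon n 0) = mon (n + \<sigma> 0) 0"
      using \<sigma>[of n] \<sigma>_shift[of n] by simp
    show "\<exists>\<alpha> \<beta>. \<alpha> \<noteq> 0 \<and> \<phi> (mon n 1) =
        (\<lambda>p. \<alpha> * mon (n + \<sigma> 0) 1 p + \<beta> * (mon (n + \<sigma> 0 + 1) 0 p - mon (n + \<sigma> 0) 0 p))"
      using mon1(2)[of n] \<sigma>_shift[of n] \<sigma>_shift[of "n + 1"] by (simp add: ac_simps)
  qed
qed

end
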